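(* Let $\Sigma=\mathbb R$. There exists a class $\mathcal F\subseteq\mathbb R^{\mathbb R^*}$ of generators $f:\mathbb R^*\to\mathbb R$ such that $\mathrm{Pdim}(\mathcal F)=1$ but $\mathrm{Pdim}(\mathcal F^{\mathrm{e2e}(T)})=\infty$, already for $T=2$.
   Context: $\mathbb R^*$ is the set of finite sequences of reals. For $f:\mathbb R^*\to\mathbb R$, $\bar f(\mathbf x)$ is $\mathbf x$ with $f(\mathbf x)$ appended; $f^{\mathrm{CoT}(T)}=\bar f^{\circ T}$; $f^{\mathrm{e2e}(T)}(\mathbf x)$ is the last entry of $f^{\mathrm{CoT}(T)}(\mathbf x)$; $\mathcal F^{\mathrm{e2e}(T)}=\{f^{\mathrm{e2e}(T)}:f\in\mathcal F\}$. Pseudo-dimension $\mathrm{Pdim}(\mathcal H)$ of a real-valued class on a domain $\mathcal X$: the largest $D$ such that there exist $\mathbf x_1,\dots,\mathbf x_D\in\mathcal X$ and thresholds $\theta_1,\dots,\theta_D\in\mathbb R$ with $|\{(\mathrm{sign}(h(\mathbf x_1)-\theta_1),\dots,\mathrm{sign}(h(\mathbf x_D)-\theta_D)):h\in\mathcal H\}|=2^D$; it is $\infty$ if no largest such $D$ exists. *)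

theory Defs
  imports Main "HOL-Library.Extended_Nat"
begin

definition append_gen :: "(real list \<Rightarrow> real) \<Rightarrow> real list \<Rightarrow> real list" where
  "append_gen f xs = xs @ [f xs]"

definition CoT :: "nat \<Rightarrow> (real list \<Rightarrow> real) \<Rightarrow> real list \<Rightarrow> real list" where
  "CoT T f = (append_gen f) ^^ T"

definition e2e :: "nat \<Rightarrow> (real list \<Rightarrow> real) \<Rightarrow> real list \<Rightarrow> real" where
  "e2e T f xs = last (CoT T f xs)"

definition e2e_class :: "nat \<Rightarrow> (real list \<Rightarrow> real) set \<Rightarrow> (real list \<Rightarrow> real) set" where
  "e2e_class T F = e2e T ` F"

text \<open>Pseudo-shattering of D points (domain = all of UNIV); sign(z) is read as the
  binary indicator z \<ge> 0.\<close>
definition pshatters :: "('a \<Rightarrow> real) set \<Rightarrow> nat \<Rightarrow> bool" where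
  "pshatters H D \<longleftrightarrow> (\<exists>(xs :: nat \<Rightarrow> 'a) (\<theta> :: nat \<Rightarrow> real).
     card ((\<lambda>h. map (\<lambda>i. \<theta> i \<le> h (xs i)) [0..<D]) ` H) = 2 ^ D)"

definition Pdim :: "('a \<Rightarrow> real) set \<Rightarrow> enat" where
  "Pdim H = Sup (enat ` {D. pshatters H D})"

end

theory Submission
  imports Defs "HOL-Library.Nat_Bijection"
begin

text \<open>Let \<open>f\<^sub>b\<close> output the parameter \<open>b\<close> on inputs of length one and, on a pair
  \<open>[x, b]\<close>, the \<open>x\<close>-th bit of \<open>b\<close> (both read as natural numbers).
  The one-step class is a pointwise chain indexed by \<open>b\<close>, and a chain cannot realise the two
  crossing patterns on two points, so its pseudo-dimension is 1. After two steps, however,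
  \<open>f\<^sub>b\<close> maps \<open>[x]\<close> to the \<open>x\<close>-th bit of \<open>b\<close>, and as \<open>b\<close> ranges over the codes of finite sets
  of naturals every pattern on the points \<open>[0], \<dots>, [D - 1]\<close> is realised.\<close>

lemma pshatters_iff_all_patterns:
  "pshatters H D \<longleftrightarrow>
     (\<exists>xs \<theta>. \<forall>l. length l = D \<longrightarrow> (\<exists>h\<in>H. \<forall>i<D. l ! i = (\<theta> i \<le> h (xs i))))"
proof -
  have lists_finite: "finite {l :: bool list. length l = D}"
    using finite_lists_length_eq[of "UNIV :: bool set" D] by simp
  have lists_card: "card {l :: bool list. length l = D} = 2 ^ D"
    using card_lists_length_eq[of "UNIV :: bool set" D] by simp
  have "card ((\<lambda>h. map (\<lambda>i. \<theta> i \<le> h (xs i)) [0..<D]) ` H) = 2 ^ D \<longleftrightarrow>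
        (\<forall>l. length l = D \<longrightarrow> (\<exists>h\<in>H. \<forall>i<D. l ! i = (\<theta> i \<le> h (xs i))))"
    for xs :: "nat \<Rightarrow> 'a" and \<theta>
  proof -
    let ?patterns = "(\<lambda>h. map (\<lambda>i. \<theta> i \<le> h (xs i)) [0..<D]) ` H"
    have sub: "?patterns \<subseteq> {l. length l = D}" by auto
    have "card ?patterns = 2 ^ D \<longleftrightarrow> ?patterns = {l. length l = D}"
      using card_subset_eq[OF lists_finite sub] lists_card by auto
    also have "\<dots> \<longleftrightarrow> (\<forall>l. length l = D \<longrightarrow> l \<in> ?patterns)"
      using sub by blast
    also have "\<dots> \<longleftrightarrow> (\<forall>l. length l = D \<longrightarrow> (\<exists>h\<in>H. \<forall>i<D. l ! i = (\<theta> i \<le> h (xs i))))"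
      by (auto simp: list_eq_iff_nth_eq image_iff)
    finally show ?thesis .
  qed
  then show ?thesis
    unfolding pshatters_def by simp
qed

lemma pshatters_pointwise_chain_le_1:
  assumes chain: "\<And>h h'. h \<in> H \<Longrightarrow> h' \<in> H \<Longrightarrow> (\<forall>x. h x \<le> h' x) \<or> (\<forall>x. h' x \<le> h x)"
    and "pshatters H D"
  shows "D \<le> 1"
proof (rule ccontr)
  assume "\<not> D \<le> 1"
  obtain xs \<theta> where all: "\<And>l. length l = D \<Longrightarrow> \<exists>h\<in>H. \<forall>i<D. l ! i = (\<theta> i \<le> h (xs i))"
    using \<open>pshatters H D\<close> unfolding pshatters_iff_all_patterns by blast
  obtain h where "h \<in> H" and pattern_zero: "\<forall>i<D. (i = 0) = (\<theta> i \<le> h (xs i))"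
    using all[of "map (\<lambda>i. i = 0) [0..<D]"] by auto
  have h: "\<theta> 0 \<le> h (xs 0)" "h (xs 1) < \<theta> 1"
    using pattern_zero[rule_format, of 0] pattern_zero[rule_format, of 1] \<open>\<not> D \<le> 1\<close> by auto
  obtain h' where "h' \<in> H" and pattern_one: "\<forall>i<D. (i = 1) = (\<theta> i \<le> h' (xs i))"
    using all[of "map (\<lambda>i. i = 1) [0..<D]"] by auto
  have h': "h' (xs 0) < \<theta> 0" "\<theta> 1 \<le> h' (xs 1)"
    using pattern_one[rule_format, of 0] pattern_one[rule_format, of 1] \<open>\<not> D \<le> 1\<close> by auto
  then have "h' (xs 0) < h (xs 0)" "h (xs 1) < h' (xs 1)"
    using h by auto
  with chain[OF \<open>h \<in> H\<close> \<open>h' \<in> H\<close>] show False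
    by (metis leD)
qed

lemma pshatters_1_if_values_differ:
  assumes "h \<in> H" "h' \<in> H" "h x < h' x"
  shows "pshatters H 1"
  unfolding pshatters_iff_all_patterns
proof (intro exI allI impI)
  fix l :: "bool list"
  assume "length l = 1"
  then have "l = [True] \<or> l = [False]"
    by (cases l) auto
  with assms show "\<exists>h\<in>H. \<forall>i<1. l ! i = ((\<lambda>_. h' x) i \<le> h ((\<lambda>_. x) i))"
    by (auto simp: not_le)
qed

lemma Pdim_eq_1:
  assumes "pshatters H 1" "\<And>D. pshatters H D \<Longrightarrow> D \<le> 1"
  shows "Pdim H = 1"
  unfolding Pdim_def
proof (rule antisym)
  show "Sup (enat ` {D. pshatters H D}) \<le> 1"
    using assms(2) by (auto intro!: Sup_least simp: one_enat_def)
  show "1 \<le> Sup (enat ` {D. pshatters H D})"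
    using assms(1) by (auto intro!: Sup_upper simp: one_enat_def)
qed

lemma Pdim_eq_infinity:
  assumes "\<And>D. pshatters H D"
  shows "Pdim H = \<infinity>"
proof -
  have "infinite (range enat)"
    using finite_imageD[of enat UNIV] by (auto simp: inj_on_def)
  then show ?thesis
    using assms by (simp add: Pdim_def Sup_enat_def)
qed

lemma e2e_2:
  "e2e 2 f xs = f (xs @ [f xs])"
  by (simp add: e2e_def CoT_def append_gen_def numeral_2_eq_2)

definition bit_of :: "real \<Rightarrow> real \<Rightarrow> real" where
  "bit_of x b = (if nat \<lfloor>x\<rfloor> \<in> set_decode (nat \<lfloor>b\<rfloor>) then 1 else 0)"

definition echo_then_bit :: "real \<Rightarrow> real list \<Rightarrow> real" where
  "echo_then_bit b xs =
     (if length xs = 1 then b else if length xs = 2 then bit_of (xs ! 0) (xs ! 1) else 0)"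

lemma echo_then_bit_mono:
  "b \<le> b' \<Longrightarrow> echo_then_bit b xs \<le> echo_then_bit b' xs"
  by (simp add: echo_then_bit_def)

lemma e2e_2_echo_then_bit:
  "e2e 2 (echo_then_bit b) [x] = bit_of x b"
  by (simp add: e2e_2 echo_then_bit_def)

lemma bit_of_set_encode:
  assumes "finite S"
  shows "bit_of (real i) (real (set_encode S)) = (if i \<in> S then 1 else 0)"
  using assms by (simp add: bit_of_def)

lemma Pdim_echo_then_bit: "Pdim (range echo_then_bit) = 1"
proof (rule Pdim_eq_1)
  show "pshatters (range echo_then_bit) 1"
    by (rule pshatters_1_if_values_differ[of "echo_then_bit 0" _ "echo_then_bit 1" "[0]"])
      (auto simp: echo_then_bit_def)
  show "D \<le> 1" if "pshatters (range echo_then_bit) D" for D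
  proof (rule pshatters_pointwise_chain_le_1[OF _ that])
    fix h h'
    assume "h \<in> range echo_then_bit" "h' \<in> range echo_then_bit"
    then obtain b b' where "h = echo_then_bit b" "h' = echo_then_bit b'"
      by blast
    then show "(\<forall>x. h x \<le> h' x) \<or> (\<forall>x. h' x \<le> h x)"
      by (metis echo_then_bit_mono linear)
  qed
qed

lemma pshatters_e2e_echo_then_bit: "pshatters (e2e_class 2 (range echo_then_bit)) D"
  unfolding pshatters_iff_all_patterns
proof (intro exI allI impI)
  fix l :: "bool list"
  let ?b = "real (set_encode {i. i < D \<and> l ! i})"
  have "\<forall>i<D. l ! i = (1 \<le> e2e 2 (echo_then_bit ?b) [real i])"
    by (simp add: e2e_2_echo_then_bit bit_of_set_encode)
  moreover have "e2e 2 (echo_then_bit ?b) \<in> e2e_class 2 (range echo_then_bit)"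
    by (simp add: e2e_class_def)
  ultimately show "\<exists>h\<in>e2e_class 2 (range echo_then_bit).
      \<forall>i<D. l ! i = ((\<lambda>_. 1) i \<le> h ((\<lambda>i. [real i]) i))"
    by blast
qed

theorem theoremE6:
  shows "\<exists>F :: (real list \<Rightarrow> real) set. Pdim F = 1 \<and> Pdim (e2e_class 2 F) = \<infinity>"
  using Pdim_echo_then_bit Pdim_eq_infinity[OF pshatters_e2e_echo_then_bit] by blast

end
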